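(* Let $r\geqslant1$. Ecalle's senary relation $$\mathrm{teru}( M)^r=\mathrm{push}\circ\mathrm{mantar}\circ\mathrm{teru}\circ\mathrm{mantar}( M)^r$$ for $M\in\mathrm{ARI}$ is equivalent to \begin{align*} &\underset{\sim}{u}(M)^{r+1}(x_1,\dots,x_{r+1})+\mathrm{coll}^{r+1}_{{2,3}}\circ \underset{\sim}{u}(M)^{r+1}(x_1,\dots,x_{r+1}) \\ &= \underset{\sim}{u}(M)^{r+1}(x_2,\dots,x_{r+1},x_1)+\mathrm{coll}^{r+1}_{{1,2}}\circ \underset{\sim}{u}(M)^{r+1}(x_1,\dots,x_{r+1}). \end{align*}
   Context: A mould is a sequence $M=(M^m(x_1,\dots,x_m))_{m\geqslant0}$ with $M^0(\emptyset)\in\mathbb Q$ and $M^m\in\mathbb Q[x_1,\dots,x_m]$; $\mathcal M(\mathcal F)$ denotes the set of moulds and $\mathrm{ARI}=\{M\in\mathcal M(\mathcal F)\mid M^0(\emptyset)=0\}$. The operators are: $\mathrm{swap}(M)^m(v_1,\dots,v_m)=M^m(v_m,v_{m-1}-v_m,\dots,v_1-v_2)$; $\mathrm{teru}(M)^m(u_1,\dots,u_m)=M^m(u_1,\dots,u_m)+\frac{1}{u_m}\{M^{m-1}(u_1,\dots,u_{m-2},u_{m-1}+u_m)-M^{m-1}(u_1,\dots,u_{m-1})\}$; (Ecalle's) $\mathrm{mantar}(M)^m(u_1,\dots,u_m)=(-1)^{m-1}M^m(u_m,\dots,u_1)$ and $\mathrm{push}(M)^m(u_1,\dots,u_m)=M^m(-u_1-\cdots-u_m,u_1,\dots,u_{m-1})$.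 The parallel translation $\underset{\sim}{t}:\mathcal M(\mathcal F)\to\mathcal M(\mathcal F)$ is $\underset{\sim}{t}(M)^m(x_1,\dots,x_m)=M^m(x_1,\dots,x_m)$ for $m=0,1$ and $=M^{m-1}(x_2-x_1,\dots,x_m-x_1)$ for $m\geqslant2$, and $\underset{\sim}{u}:=\underset{\sim}{t}\circ\mathrm{swap}$. For $m\geqslant2$, $1\leqslant i\leqslant m-1$, the collision map $\mathrm{coll}^m_{i,i+1}$ leaves all components of depth $j\neq m$ unchanged and sets $\mathrm{coll}^m_{i,i+1}(M)^m(x_1,\dots,x_m)=\frac{1}{x_i-x_{i+1}}\{M^{m-1}(x_1,\dots,x_i,x_{i+2},\dots,x_m)-M^{m-1}(x_1,\dots,x_{i-1},x_{i+1},x_{i+2},\dots,x_m)\}$. *)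

theory Defs
  imports Complex_Main
begin

(* Polynomial functions Q^N -> Q in the variables x 0, ..., x (n-1).
   Over the infinite field Q, polynomials in Q[x_1..x_n] correspond
   bijectively to such polynomial functions. *)
inductive polyfun :: "nat \<Rightarrow> ((nat \<Rightarrow> rat) \<Rightarrow> rat) \<Rightarrow> bool" for n :: nat where
  pf_const: "polyfun n (\<lambda>x. c)"
| pf_var: "i < n \<Longrightarrow> polyfun n (\<lambda>x. x i)"
| pf_add: "polyfun n f \<Longrightarrow> polyfun n g \<Longrightarrow> polyfun n (\<lambda>x. f x + g x)"
| pf_mult: "polyfun n f \<Longrightarrow> polyfun n g \<Longrightarrow> polyfun n (\<lambda>x. f x * g x)"

(* A mould M = (M^m)_m is encoded as a function on lists: M^m(x_1,...,x_m) = M [x_1,...,x_m].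
   It is a mould (element of M(F)) iff each depth-m component is a polynomial in m variables. *)
definition is_mould :: "(rat list \<Rightarrow> rat) \<Rightarrow> bool" where
  "is_mould M \<longleftrightarrow> (\<forall>m. polyfun m (\<lambda>x. M (map x [0..<m])))"

definition ARI :: "(rat list \<Rightarrow> rat) set" where
  "ARI = {M. is_mould M \<and> M [] = 0}"

(* swap(M)^m(v_1..v_m) = M^m(v_m, v_{m-1}-v_m, ..., v_1-v_2) *)
definition swap :: "(rat list \<Rightarrow> rat) \<Rightarrow> rat list \<Rightarrow> rat" where
  "swap M v = (let m = length v in
     M (map (\<lambda>i. if i = 0 then v ! (m - 1) else v ! (m - 1 - i) - v ! (m - i)) [0..<m]))"

definition teru :: "(rat list \<Rightarrow> rat) \<Rightarrow> rat list \<Rightarrow> rat" where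
  "teru M u = (let m = length u in
     if m < 2 then M u
     else M u + (M (take (m - 2) u @ [u ! (m - 2) + u ! (m - 1)]) - M (take (m - 1) u)) / u ! (m - 1))"

definition mantar :: "(rat list \<Rightarrow> rat) \<Rightarrow> rat list \<Rightarrow> rat" where
  "mantar M u = (-1) ^ (length u - 1) * M (rev u)"

definition push :: "(rat list \<Rightarrow> rat) \<Rightarrow> rat list \<Rightarrow> rat" where
  "push M u = (if u = [] then M [] else M ((- sum_list u) # butlast u))"

definition ptrans :: "(rat list \<Rightarrow> rat) \<Rightarrow> rat list \<Rightarrow> rat" where
  "ptrans M x = (if length x < 2 then M x else M (map (\<lambda>y. y - hd x) (tl x)))"

definition utrans :: "(rat list \<Rightarrow> rat) \<Rightarrow> rat list \<Rightarrow> rat" where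
  "utrans M = ptrans (swap M)"

(* remove the k-th entry (1-indexed) *)
definition del_at :: "nat \<Rightarrow> rat list \<Rightarrow> rat list" where
  "del_at k x = take (k - 1) x @ drop k x"

(* collision map coll^m_{i,i+1} (1-indexed i); the index i+1 is read cyclically modulo m,
   i.e. for i = m it is 1 (only needed for coll^2_{2,3}, the case r = 1). *)
definition coll :: "nat \<Rightarrow> nat \<Rightarrow> (rat list \<Rightarrow> rat) \<Rightarrow> rat list \<Rightarrow> rat" where
  "coll m i M x = (if length x = m then
     (let j = (if i + 1 \<le> m then i + 1 else 1) in
       (M (del_at j x) - M (del_at i x)) / (x ! (i - 1) - x ! (j - 1)))
   else M x)"

end

(*
  For a list x = [x_0, ..., x_r] (r >= 2) let u = utrans_arg x be the list at which
  utrans M x evaluates M, i.e. the swap of the translate of x.  Then sum u = x_1 - x_0 and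
  the last entry of u is x_1 - x_2, and the rotation of x and the deletions of x_0, x_1, x_2
  (which are what coll^{r+1}_{1,2} and coll^{r+1}_{2,3} evaluate) are sent by utrans_arg
  exactly to the arguments of M occurring in teru M u and in push (mantar (teru (mantar M))) u.
  Hence the collision relation at x is literally the senary relation at u.

  Every admissible u comes from some x, but that x need not have distinct entries.  After
  clearing the denominators (x_0 - x_1)(x_1 - x_2), the collision relation is polynomial
  along the line x + t (0, 1, ..., r), which has distinct entries for all but finitely many t;
  so it holds at t = 0 as well.  In depth r = 1 both sides just say that M^1 is even.
*)

theory Submission
  imports Defs "HOL-Computational_Algebra.Polynomial"
begin

definition poly_fun :: "('a::comm_ring_1 \<Rightarrow> 'a) \<Rightarrow> bool" where
  "poly_fun g \<longleftrightarrow> (\<exists>p. \<forall>t. g t = poly p t)"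

lemma poly_fun_const [intro]: "poly_fun (\<lambda>t. c)"
  unfolding poly_fun_def by (intro exI[of _ "[:c:]"]) simp

lemma poly_fun_ident [intro]: "poly_fun (\<lambda>t. t)"
  unfolding poly_fun_def by (intro exI[of _ "[:0, 1:]"]) simp

lemma poly_fun_add [intro]: "poly_fun f \<Longrightarrow> poly_fun g \<Longrightarrow> poly_fun (\<lambda>t. f t + g t)"
  unfolding poly_fun_def by (metis poly_add)

lemma poly_fun_diff [intro]: "poly_fun f \<Longrightarrow> poly_fun g \<Longrightarrow> poly_fun (\<lambda>t. f t - g t)"
  unfolding poly_fun_def by (metis poly_diff)

lemma poly_fun_mult [intro]: "poly_fun f \<Longrightarrow> poly_fun g \<Longrightarrow> poly_fun (\<lambda>t. f t * g t)"
  unfolding poly_fun_def by (metis poly_mult)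

lemma poly_fun_eq_0_cofinite:
  fixes g :: "'a::{idom, ring_char_0} \<Rightarrow> 'a"
  assumes "poly_fun g" "finite B" "\<And>t. t \<notin> B \<Longrightarrow> g t = 0"
  shows "g t = 0"
proof -
  obtain p where p: "\<And>t. g t = poly p t" using assms(1) unfolding poly_fun_def by blast
  have "p = 0"
  proof (rule ccontr)
    assume "p \<noteq> 0"
    then have "finite (B \<union> {t. poly p t = 0})" using assms(2) poly_roots_finite by blast
    moreover have "B \<union> {t. poly p t = 0} = UNIV" using assms(3) p by auto
    ultimately have "finite (UNIV :: 'a set)" by simp
    then show False using infinite_UNIV_char_0 by blast
  qed
  then show ?thesis using p by simp
qed

lemma polyfun_comp_poly_fun:
  "polyfun n f \<Longrightarrow> (\<And>i. i < n \<Longrightarrow> poly_fun (g i)) \<Longrightarrow> poly_fun (\<lambda>t. f (\<lambda>i. g i t))"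
  by (induction rule: polyfun.induct) auto

definition poly_curve :: "('a::comm_ring_1 \<Rightarrow> 'a list) \<Rightarrow> nat \<Rightarrow> bool" where
  "poly_curve L n \<longleftrightarrow> (\<forall>t. length (L t) = n) \<and> (\<forall>i<n. poly_fun (\<lambda>t. L t ! i))"

lemma poly_curve_length: "poly_curve L n \<Longrightarrow> length (L t) = n"
  unfolding poly_curve_def by blast

lemma poly_curve_nth: "poly_curve L n \<Longrightarrow> i < n \<Longrightarrow> poly_fun (\<lambda>t. L t ! i)"
  unfolding poly_curve_def by blast

lemma mould_poly_curve:
  assumes "is_mould M" "poly_curve L m"
  shows "poly_fun (\<lambda>t. M (L t))"
proof -
  have "polyfun m (\<lambda>x. M (map x [0..<m]))" using assms(1) unfolding is_mould_def by blast
  from polyfun_comp_poly_fun[OF this, of "\<lambda>i t. L t ! i"]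
  have "poly_fun (\<lambda>t. M (map (\<lambda>i. L t ! i) [0..<m]))"
    using poly_curve_nth[OF assms(2)] by blast
  moreover have "map (\<lambda>i. L t ! i) [0..<m] = L t" for t
    using poly_curve_length[OF assms(2)] by (metis map_nth)
  ultimately show ?thesis by simp
qed

definition line_through :: "'a::comm_ring_1 list \<Rightarrow> 'a \<Rightarrow> 'a list" where
  "line_through x t = map (\<lambda>i. x ! i + t * of_nat i) [0..<length x]"

lemma line_through_0 [simp]: "line_through x 0 = x"
  by (simp add: line_through_def map_nth)

lemma poly_curve_line_through: "poly_curve (line_through x) (length x)"
  unfolding poly_curve_def line_through_def
  by (auto intro!: poly_fun_add poly_fun_mult poly_fun_const poly_fun_ident simp del: upt_Suc)

lemma finite_nondistinct_line_through:
  fixes x :: "'a::field_char_0 list"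
  shows "finite {t. \<not> distinct (line_through x t)}"
proof -
  let ?n = "length x"
  have "{t. \<not> distinct (line_through x t)} \<subseteq>
      (\<lambda>(i, j). (x ! i - x ! j) / (of_nat j - of_nat i)) ` ({..<?n} \<times> {..<?n})"
  proof
    fix t assume "t \<in> {t. \<not> distinct (line_through x t)}"
    then obtain i j where ij: "i < ?n" "j < ?n" "i \<noteq> j"
        "x ! i + t * of_nat i = x ! j + t * of_nat j"
      unfolding distinct_conv_nth line_through_def by (auto simp del: upt_Suc)
    have "(of_nat j - of_nat i :: 'a) \<noteq> 0" using ij(3) by simp
    moreover have "t * (of_nat j - of_nat i) = x ! i - x ! j"
      using ij(4) by (simp add: algebra_simps)
    ultimately have "t = (x ! i - x ! j) / (of_nat j - of_nat i)" by (simp add: eq_divide_eq)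
    with ij show "t \<in> (\<lambda>(i, j). (x ! i - x ! j) / (of_nat j - of_nat i)) ` ({..<?n} \<times> {..<?n})"
      by (intro rev_image_eqI[of "(i, j)"]) auto
  qed
  then show ?thesis by (rule finite_subset) simp
qed

lemma vanishing_on_distinct_lists:
  fixes F :: "'a::field_char_0 list \<Rightarrow> 'a"
  assumes poly: "\<And>L. poly_curve L n \<Longrightarrow> poly_fun (\<lambda>t. F (L t))"
    and distinct: "\<And>y. length y = n \<Longrightarrow> distinct y \<Longrightarrow> F y = 0"
    and "length x = n"
  shows "F x = 0"
proof -
  have "poly_fun (\<lambda>t. F (line_through x t))"
    using poly poly_curve_line_through assms(3) by blast
  moreover have "F (line_through x t) = 0" if "t \<notin> {t. \<not> distinct (line_through x t)}" for t
    using distinct that assms(3) by (simp add: line_through_def)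
  ultimately have "F (line_through x 0) = 0"
    by (rule poly_fun_eq_0_cofinite[OF _ finite_nondistinct_line_through])
  then show ?thesis by simp
qed

lemma nth_tl_append_hd:
  "length x = Suc n \<Longrightarrow> i < Suc n \<Longrightarrow> (tl x @ [hd x]) ! i = (if i < n then x ! Suc i else x ! 0)"
  by (cases x) (auto simp: nth_append)

lemma length_del_at [simp]: "1 \<le> k \<Longrightarrow> k \<le> length x \<Longrightarrow> length (del_at k x) = length x - 1"
  unfolding del_at_def by simp

lemma nth_del_at:
  "1 \<le> k \<Longrightarrow> k \<le> length x \<Longrightarrow> i < length x - 1 \<Longrightarrow>
    del_at k x ! i = (if i < k - 1 then x ! i else x ! Suc i)"
  unfolding del_at_def by (auto simp: nth_append min_def)

lemma all_length_eq_1_iff: "(\<forall>u. length u = 1 \<longrightarrow> P u) \<longleftrightarrow> (\<forall>a. P [a])"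
  by (auto simp: length_Suc_conv)

lemma all_length_eq_2_iff: "(\<forall>x. length x = 2 \<longrightarrow> P x) \<longleftrightarrow> (\<forall>a b. P [a, b])"
  by (auto simp: length_Suc_conv numeral_2_eq_2)

definition utrans_arg :: "'a::ab_group_add list \<Rightarrow> 'a list" where
  "utrans_arg y = (let v = map (\<lambda>z. z - hd y) (tl y); m = length v in
     map (\<lambda>i. if i = 0 then v ! (m - 1) else v ! (m - 1 - i) - v ! (m - i)) [0..<m])"

lemma utrans_eq_utrans_arg: "2 \<le> length y \<Longrightarrow> utrans M y = M (utrans_arg y)"
  unfolding utrans_def ptrans_def swap_def utrans_arg_def Let_def by simp

lemma length_utrans_arg [simp]: "length (utrans_arg y) = length y - 1"
  unfolding utrans_arg_def Let_def by simp

lemma nth_utrans_arg: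
  assumes "length y = Suc n" "i < n"
  shows "utrans_arg y ! i = (if i = 0 then y ! n - y ! 0 else y ! (n - i) - y ! (Suc n - i))"
proof (cases y)
  case Nil
  then show ?thesis using assms by simp
next
  case (Cons a v)
  then have "utrans_arg y ! i =
      (if i = 0 then v ! (n - 1) - a else (v ! (n - 1 - i) - a) - (v ! (n - i) - a))"
    using assms unfolding utrans_arg_def Let_def by simp
  moreover have
      "y ! n = v ! (n - 1)" "y ! (n - i) = v ! (n - 1 - i)" "y ! (Suc n - i) = v ! (n - i)"
    using Cons assms(2) by (auto simp: nth_Cons' Suc_diff_le)
  ultimately show ?thesis using Cons by simp
qed

lemma sum_list_utrans_arg:
  assumes "length x = Suc r" "1 \<le> r"
  shows "sum_list (utrans_arg x) = x ! 1 - x ! 0"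
proof -
  have "sum_list (utrans_arg x) = (\<Sum>i<r. utrans_arg x ! i)"
    using assms by (simp add: sum_list_sum_nth atLeast0LessThan)
  also have "\<dots> = (x ! r - x ! 0) + (\<Sum>i=1..<r. x ! (r - i) - x ! (Suc r - i))"
    using assms by (simp add: nth_utrans_arg lessThan_atLeast0 sum.atLeast_Suc_lessThan)
  also have "(\<Sum>i=1..<r. x ! (r - i) - x ! (Suc r - i)) = (\<Sum>i=1..<r. x ! i - x ! Suc i)"
    by (rule sum.reindex_bij_witness[where i="\<lambda>i. r - i" and j="\<lambda>i. r - i"])
      (auto simp: Suc_diff_le)
  also have "\<dots> = - (\<Sum>i=1..<r. x ! Suc i - x ! i)"
    by (simp add: sum_negf[symmetric])
  also have "\<dots> = x ! 1 - x ! r"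
    using sum_Suc_diff'[OF assms(2), of "\<lambda>i. x ! i"] by simp
  finally show ?thesis by simp
qed

lemma last_utrans_arg:
  assumes "length x = Suc r" "2 \<le> r"
  shows "utrans_arg x ! (r - 1) = x ! 1 - x ! 2"
  using nth_utrans_arg[OF assms(1), of "r - 1"] assms(2) by (simp add: Suc_diff_le numeral_2_eq_2)

lemma utrans_arg_rotate1:
  assumes "length x = Suc r" "2 \<le> r"
  shows "utrans_arg (tl x @ [hd x]) = (- sum_list (utrans_arg x)) # butlast (utrans_arg x)"
proof (rule nth_equalityI)
  have len: "length (tl x @ [hd x]) = Suc r" using assms by (cases x) auto
  then show "length (utrans_arg (tl x @ [hd x])) =
      length ((- sum_list (utrans_arg x)) # butlast (utrans_arg x))"
    using assms by simp
  fix i assume "i < length (utrans_arg (tl x @ [hd x]))"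
  then have i: "i < r" using len by simp
  show "utrans_arg (tl x @ [hd x]) ! i = ((- sum_list (utrans_arg x)) # butlast (utrans_arg x)) ! i"
  proof (cases i)
    case 0
    then show ?thesis
      using assms i
        by (simp add: nth_utrans_arg[OF len] nth_tl_append_hd[OF assms(1)] sum_list_utrans_arg)
  next
    case (Suc j)
    then have "Suc (r - Suc j) = r - j" using i by simp
    then show ?thesis
      using assms i Suc
      by (simp add: nth_utrans_arg[OF len] nth_tl_append_hd[OF assms(1)] nth_utrans_arg[OF assms(1)]
          nth_butlast Suc_diff_le)
  qed
qed

lemma utrans_arg_del_at_3:
  assumes "length x = Suc r" "2 \<le> r"
  shows "utrans_arg (del_at 3 x) =
    take (r - 2) (utrans_arg x) @ [utrans_arg x ! (r - 2) + utrans_arg x ! (r - 1)]"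
proof (rule nth_equalityI)
  obtain n where n: "r = Suc n" using assms by (cases r) auto
  have len: "length (del_at 3 x) = Suc n" using assms n by simp
  then show "length (utrans_arg (del_at 3 x)) =
      length (take (r - 2) (utrans_arg x) @ [utrans_arg x ! (r - 2) + utrans_arg x ! (r - 1)])"
    using assms n by simp
  fix i assume "i < length (utrans_arg (del_at 3 x))"
  then have i: "i < n" using len by simp
  consider "i < n - 1" | "n = 1" "i = 0" | "2 \<le> n" "i = n - 1" using i by linarith
  then show "utrans_arg (del_at 3 x) ! i =
      (take (r - 2) (utrans_arg x) @ [utrans_arg x ! (r - 2) + utrans_arg x ! (r - 1)]) ! i"
    unfolding nth_utrans_arg[OF len i]
    by cases
      (use assms n in \<open>auto simp: nth_utrans_arg[OF assms(1)] nth_del_at nth_append Suc_diff_le\<close>)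
qed

lemma utrans_arg_del_at_2:
  assumes "length x = Suc r" "2 \<le> r"
  shows "utrans_arg (del_at 2 x) = butlast (utrans_arg x)"
proof (rule nth_equalityI)
  obtain n where n: "r = Suc n" using assms by (cases r) auto
  have len: "length (del_at 2 x) = Suc n" using assms n by simp
  then show "length (utrans_arg (del_at 2 x)) = length (butlast (utrans_arg x))"
    using assms n by simp
  fix i assume "i < length (utrans_arg (del_at 2 x))"
  then have i: "i < n" using len by simp
  show "utrans_arg (del_at 2 x) ! i = butlast (utrans_arg x) ! i"
    unfolding nth_utrans_arg[OF len i]
    using assms n i by (auto simp: nth_del_at nth_utrans_arg[OF assms(1)] nth_butlast Suc_diff_le)
qed

lemma utrans_arg_del_at_1:
  assumes "length x = Suc r" "2 \<le> r"
  shows "utrans_arg (del_at 1 x) =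
    (utrans_arg x ! 0 - sum_list (utrans_arg x)) # tl (butlast (utrans_arg x))"
proof (rule nth_equalityI)
  obtain n where n: "r = Suc n" using assms by (cases r) auto
  have len: "length (del_at 1 x) = Suc n" using assms n by simp
  then show "length (utrans_arg (del_at 1 x)) =
      length ((utrans_arg x ! 0 - sum_list (utrans_arg x)) # tl (butlast (utrans_arg x)))"
    using assms n by simp
  fix i assume "i < length (utrans_arg (del_at 1 x))"
  then have i: "i < n" using len by simp
  show "utrans_arg (del_at 1 x) ! i =
      ((utrans_arg x ! 0 - sum_list (utrans_arg x)) # tl (butlast (utrans_arg x))) ! i"
  proof (cases i)
    case 0
    then show ?thesis
      using nth_utrans_arg[OF len i] assms n
      by (simp add: nth_del_at nth_utrans_arg[OF assms(1)] sum_list_utrans_arg)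
  next
    case (Suc j)
    then have "Suc (n - Suc j) = n - j" using i by simp
    then show ?thesis
      using nth_utrans_arg[OF len i] assms n i Suc
      by (simp add: nth_del_at nth_utrans_arg[OF assms(1)] nth_tl nth_butlast Suc_diff_le)
  qed
qed

definition utrans_arg_inv :: "'a::ab_group_add list \<Rightarrow> 'a list" where
  "utrans_arg_inv u = 0 # rev (map (\<lambda>k. sum_list (take (Suc k) u)) [0..<length u])"

lemma length_utrans_arg_inv [simp]: "length (utrans_arg_inv u) = Suc (length u)"
  by (simp add: utrans_arg_inv_def)

lemma utrans_arg_utrans_arg_inv: "utrans_arg (utrans_arg_inv u) = u"
proof (rule nth_equalityI)
  define r where "r = length u"
  have len: "length (utrans_arg_inv u) = Suc r" by (simp add: r_def)
  then show "length (utrans_arg (utrans_arg_inv u)) = length u" by (simp add: r_def)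
  have entry: "utrans_arg_inv u ! j = sum_list (take (Suc r - j) u)" if "1 \<le> j" "j \<le> r" for j
  proof -
    have "[0..<r] ! (r - j) = r - j" using that by (simp del: upt_Suc)
    then show ?thesis
      using that by (simp add: utrans_arg_inv_def r_def rev_nth nth_Cons' Suc_diff_le del: upt_Suc)
  qed
  have take_Suc: "sum_list (take (Suc m) u) = sum_list (take m u) + u ! m" if "m < r" for m
    using that by (simp add: take_Suc_conv_app_nth r_def)
  fix i assume "i < length (utrans_arg (utrans_arg_inv u))"
  then have i: "i < r" using len by simp
  show "utrans_arg (utrans_arg_inv u) ! i = u ! i"
  proof (cases "i = 0")
    case True
    moreover have "utrans_arg_inv u ! 0 = 0" by (simp add: utrans_arg_inv_def)
    ultimately show ?thesis
      using nth_utrans_arg[OF len i] entry[of r] take_Suc[of 0] i by simp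
  next
    case False
    then show ?thesis
      using nth_utrans_arg[OF len i] entry[of "r - i"] entry[of "Suc r - i"] take_Suc[OF i] i
      by (simp add: Suc_diff_le)
  qed
qed

lemma poly_curve_utrans_arg:
  assumes "poly_curve L (Suc n)"
  shows "poly_curve (\<lambda>t. utrans_arg (L t)) n"
  unfolding poly_curve_def
proof (intro conjI allI impI)
  show "length (utrans_arg (L t)) = n" for t using poly_curve_length[OF assms] by simp
  fix i assume i: "i < n"
  show "poly_fun (\<lambda>t. utrans_arg (L t) ! i)"
    unfolding nth_utrans_arg[OF poly_curve_length[OF assms] i]
    using i by (cases "i = 0") (auto intro!: poly_fun_diff poly_curve_nth[OF assms])
qed

lemma poly_curve_del_at:
  assumes "poly_curve L (Suc n)" "1 \<le> k" "k \<le> Suc n"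
  shows "poly_curve (\<lambda>t. del_at k (L t)) n"
  unfolding poly_curve_def
proof (intro conjI allI impI)
  show "length (del_at k (L t)) = n" for t using assms poly_curve_length[OF assms(1)] by simp
  fix i assume i: "i < n"
  have "del_at k (L t) ! i = (if i < k - 1 then L t ! i else L t ! Suc i)" for t
    using assms i poly_curve_length[OF assms(1)] by (simp add: nth_del_at)
  then show "poly_fun (\<lambda>t. del_at k (L t) ! i)"
    using i by (cases "i < k - 1") (simp_all add: poly_curve_nth[OF assms(1)])
qed

lemma poly_curve_rotate1:
  assumes "poly_curve L (Suc n)"
  shows "poly_curve (\<lambda>t. tl (L t) @ [hd (L t)]) (Suc n)"
  unfolding poly_curve_def
proof (intro conjI allI impI)
  show "length (tl (L t) @ [hd (L t)]) = Suc n" for t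
    using poly_curve_length[OF assms, of t] by simp
  fix i assume i: "i < Suc n"
  show "poly_fun (\<lambda>t. (tl (L t) @ [hd (L t)]) ! i)"
    unfolding nth_tl_append_hd[OF poly_curve_length[OF assms] i]
    using i by (cases "i < n") (simp_all add: poly_curve_nth[OF assms])
qed

lemma poly_fun_utrans:
  assumes "is_mould M" "poly_curve L (Suc (Suc n))"
  shows "poly_fun (\<lambda>t. utrans M (L t))"
  using mould_poly_curve[OF assms(1) poly_curve_utrans_arg[OF assms(2)]]
  by (simp add: utrans_eq_utrans_arg poly_curve_length[OF assms(2)])

lemma teru_Suc_Suc:
  "length u = Suc (Suc k) \<Longrightarrow>
    teru M u = M u + (M (take k u @ [u ! k + u ! Suc k]) - M (take (Suc k) u)) / u ! Suc k"
  by (simp add: teru_def)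

lemma push_mantar_teru_mantar_Suc_Suc:
  assumes "length u = Suc (Suc k)"
  shows "push (mantar (teru (mantar M))) u = M ((- sum_list u) # butlast u)
     + (M ((u ! 0 - sum_list u) # tl (butlast u)) - M (butlast u)) / sum_list u"
proof -
  define z where "z = (- sum_list u) # butlast u"
  define w where "w = rev z"
  have len: "length z = Suc (Suc k)" "length w = Suc (Suc k)"
    using assms by (auto simp: z_def w_def)
  have "push (mantar (teru (mantar M))) u = mantar (teru (mantar M)) z"
    using assms by (auto simp: push_def z_def)
  also have "\<dots> = (-1) ^ Suc k * teru (mantar M) w" using len by (simp add: mantar_def w_def)
  also have "teru (mantar M) w = mantar M w
      + (mantar M (take k w @ [w ! k + w ! Suc k]) - mantar M (take (Suc k) w)) / w ! Suc k"
    by (rule teru_Suc_Suc[OF len(2)])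
  also have "mantar M w = (-1) ^ Suc k * M z" using len by (simp add: mantar_def w_def)
  also have "w ! Suc k = z ! 0" using len by (simp add: w_def rev_nth)
  also have "w ! k = z ! 1" using len by (simp add: w_def rev_nth)
  also have "take (Suc k) w = rev (drop 1 z)" using len by (simp add: w_def rev_drop)
  also have "take k w = rev (drop 2 z)" using len by (simp add: w_def rev_drop)
  also have "mantar M (rev (drop 2 z) @ [z ! 1 + z ! 0]) =
      (-1) ^ k * M ((z ! 1 + z ! 0) # drop 2 z)"
    using len by (simp add: mantar_def)
  also have "mantar M (rev (drop 1 z)) = (-1) ^ k * M (drop 1 z)"
    using len by (simp add: mantar_def)
  finally have "push (mantar (teru (mantar M))) u =
      M z - (M ((z ! 1 + z ! 0) # drop 2 z) - M (drop 1 z)) / z ! 0"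
    by (simp add: algebra_simps diff_divide_distrib)
  moreover have "z ! 0 = - sum_list u" "z ! 1 = u ! 0"
      "drop 2 z = tl (butlast u)" "drop 1 z = butlast u"
    using assms by (auto simp: z_def nth_butlast drop_Suc)
  ultimately show ?thesis by (simp add: z_def algebra_simps diff_divide_distrib)
qed

definition senary_relation :: "(rat list \<Rightarrow> rat) \<Rightarrow> rat list \<Rightarrow> bool" where
  "senary_relation M u \<longleftrightarrow> teru M u = push (mantar (teru (mantar M))) u"

definition collision_relation :: "(rat list \<Rightarrow> rat) \<Rightarrow> rat list \<Rightarrow> bool" where
  "collision_relation M x \<longleftrightarrow>
    utrans M x + coll (length x) 2 (utrans M) x =
      utrans M (tl x @ [hd x]) + coll (length x) 1 (utrans M) x"

lemma coll_expand:
  assumes "length x = Suc r" "2 \<le> r"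
  shows "coll (length x) 2 F x = (F (del_at 3 x) - F (del_at 2 x)) / (x ! 1 - x ! 2)"
    and "coll (length x) 1 F x = (F (del_at 2 x) - F (del_at 1 x)) / (x ! 0 - x ! 1)"
  using assms by (simp_all add: coll_def numeral_2_eq_2 numeral_3_eq_3)

lemma collision_relation_iff_senary_relation:
  assumes len: "length x = Suc r" and r: "2 \<le> r"
  shows "collision_relation M x \<longleftrightarrow> senary_relation M (utrans_arg x)"
proof -
  obtain k where k: "r = Suc (Suc k)" using r by (metis add_2_eq_Suc le_Suc_ex)
  define u where "u = utrans_arg x"
  have len_u: "length u = Suc (Suc k)" using len k by (simp add: u_def)
  have len_rot: "length (tl x @ [hd x]) = Suc r" using len by (cases x) auto
  have sum_u: "sum_list u = x ! 1 - x ! 0" using sum_list_utrans_arg[OF len] r by (simp add: u_def)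
  have last_u: "u ! Suc k = x ! 1 - x ! 2" using last_utrans_arg[OF len r] k by (simp add: u_def)
  have "utrans M x = M u" using len r by (simp add: utrans_eq_utrans_arg u_def)
  moreover have "utrans M (tl x @ [hd x]) = M ((- sum_list u) # butlast u)"
    using len_rot r by (simp add: utrans_eq_utrans_arg u_def utrans_arg_rotate1[OF len r])
  moreover have "utrans M (del_at 3 x) = M (take k u @ [u ! k + u ! Suc k])"
    using len r k by (simp add: utrans_eq_utrans_arg u_def utrans_arg_del_at_3[OF len r])
  moreover have "utrans M (del_at 2 x) = M (take (Suc k) u)"
    using len r k len_u
      by (simp add: utrans_eq_utrans_arg u_def utrans_arg_del_at_2[OF len r] butlast_conv_take)
  moreover have "utrans M (del_at 1 x) = M ((u ! 0 - sum_list u) # tl (butlast u))"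
    unfolding utrans_arg_del_at_1[OF len r, folded u_def, symmetric]
    using len r by (intro utrans_eq_utrans_arg) simp
  moreover have "(a - b) / (x ! 0 - x ! 1) = (b - a) / sum_list u" for a b
    unfolding sum_u by (metis minus_diff_eq minus_divide_divide)
  ultimately show ?thesis
    unfolding collision_relation_def senary_relation_def coll_expand[OF len r]
      teru_Suc_Suc[OF len_u] push_mantar_teru_mantar_Suc_Suc[OF len_u] last_u u_def[symmetric]
    using len_u by (simp add: butlast_conv_take)
qed

definition collision_defect :: "(rat list \<Rightarrow> rat) \<Rightarrow> rat list \<Rightarrow> rat" where
  "collision_defect M x =
     (x ! 1 - x ! 2) * (x ! 0 - x ! 1) * (utrans M x - utrans M (tl x @ [hd x]))
     + (x ! 0 - x ! 1) * (utrans M (del_at 3 x) - utrans M (del_at 2 x))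
     - (x ! 1 - x ! 2) * (utrans M (del_at 2 x) - utrans M (del_at 1 x))"

lemma collision_relation_iff_defect_eq_0:
  assumes "length x = Suc r" "2 \<le> r" "x ! 0 \<noteq> x ! 1" "x ! 1 \<noteq> x ! 2"
  shows "collision_relation M x \<longleftrightarrow> collision_defect M x = 0"
  using assms unfolding collision_relation_def collision_defect_def coll_expand[OF assms(1,2)]
  by (simp add: field_simps)

lemma poly_fun_collision_defect:
  assumes "is_mould M" "poly_curve L (Suc r)" "2 \<le> r"
  shows "poly_fun (\<lambda>t. collision_defect M (L t))"
proof -
  obtain n where "r = Suc (Suc n)" using assms(3) by (metis add_2_eq_Suc le_Suc_ex)
  then have curve: "poly_curve L (Suc (Suc (Suc n)))" using assms(2) by simp
  have "poly_curve (\<lambda>t. del_at k (L t)) (Suc (Suc n))" if "1 \<le> k" "k \<le> 3" for k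
    using poly_curve_del_at[OF curve, of k] that by simp
  then have "poly_fun (\<lambda>t. utrans M (del_at k (L t)))" if "1 \<le> k" "k \<le> 3" for k
    using that poly_fun_utrans[OF assms(1)] by blast
  moreover have "poly_fun (\<lambda>t. utrans M (L t))" "poly_fun (\<lambda>t. utrans M (tl (L t) @ [hd (L t)]))"
    by (rule poly_fun_utrans[OF assms(1) curve],
        rule poly_fun_utrans[OF assms(1) poly_curve_rotate1[OF curve]])
  moreover have "poly_fun (\<lambda>t. L t ! i)" if "i \<le> 2" for i
    using poly_curve_nth[OF curve] that by simp
  ultimately show ?thesis
    unfolding collision_defect_def by (intro poly_fun_diff poly_fun_add poly_fun_mult) auto
qed

lemma collision_relation_of_distinct:
  assumes "is_mould M" "2 \<le> r"
    and distinct: "\<And>y. length y = Suc r \<Longrightarrow> distinct y \<Longrightarrow> collision_relation M y"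
    and "length x = Suc r" "x ! 0 \<noteq> x ! 1" "x ! 1 \<noteq> x ! 2"
  shows "collision_relation M x"
proof -
  have "collision_defect M y = 0" if "length y = Suc r" "distinct y" for y
  proof -
    have "y ! 0 \<noteq> y ! 1" "y ! 1 \<noteq> y ! 2"
      using that assms(2) by (simp_all add: nth_eq_iff_index_eq)
    then show ?thesis using distinct that collision_relation_iff_defect_eq_0 assms(2) by blast
  qed
  then have "collision_defect M x = 0"
    using vanishing_on_distinct_lists poly_fun_collision_defect[OF assms(1) _ assms(2)] assms(4)
    by blast
  then show ?thesis using collision_relation_iff_defect_eq_0 assms(2,4-6) by blast
qed

lemma senary_iff_collision_depth_one:
  "(\<forall>u. length u = 1 \<and> u ! 0 \<noteq> 0 \<and> sum_list u \<noteq> 0 \<longrightarrow> senary_relation M u) \<longleftrightarrow>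
   (\<forall>x. length x = 2 \<and> distinct x \<longrightarrow> collision_relation M x)"
proof -
  have senary: "senary_relation M [a] \<longleftrightarrow> M [a] = M [- a]" for a
    by (simp add: senary_relation_def teru_def push_def mantar_def)
  \<comment> \<open>coll 2 2 reads the index 3 cyclically as 1, so both collision terms coincide.\<close>
  have "(p - q) / (c - d) = (q - p) / (d - c)" for p q c d :: rat
    by (metis minus_diff_eq minus_divide_divide)
  then have collision: "collision_relation M [a, b] \<longleftrightarrow> M [b - a] = M [a - b]" for a b
    unfolding collision_relation_def
      by (simp add: coll_def del_at_def utrans_def ptrans_def swap_def)
  have "(\<forall>u. length u = 1 \<and> u ! 0 \<noteq> 0 \<and> sum_list u \<noteq> 0 \<longrightarrow> senary_relation M u) \<longleftrightarrow>
      (\<forall>a. a \<noteq> 0 \<longrightarrow> M [a] = M [- a])"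
    using all_length_eq_1_iff[of "\<lambda>u. u ! 0 \<noteq> 0 \<and> sum_list u \<noteq> 0 \<longrightarrow> senary_relation M u"]
    by (simp add: senary imp_conjL)
  also have "\<dots> \<longleftrightarrow> (\<forall>a b. a \<noteq> b \<longrightarrow> M [b - a] = M [a - b])"
  proof (intro iffI allI impI)
    fix a b :: rat
    assume "\<forall>a. a \<noteq> 0 \<longrightarrow> M [a] = M [- a]" "a \<noteq> b"
    then show "M [b - a] = M [a - b]" by (metis minus_diff_eq right_minus_eq)
  next
    fix a :: rat
    assume "\<forall>a b. a \<noteq> b \<longrightarrow> M [b - a] = M [a - b]" "a \<noteq> 0"
    then show "M [a] = M [- a]" by (metis diff_0 diff_0_right)
  qed
  also have "\<dots> \<longleftrightarrow> (\<forall>x. length x = 2 \<and> distinct x \<longrightarrow> collision_relation M x)"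
    using all_length_eq_2_iff[of "\<lambda>x. distinct x \<longrightarrow> collision_relation M x"]
    by (simp add: collision imp_conjL)
  finally show ?thesis .
qed

lemma senary_iff_collision:
  assumes "is_mould M" "2 \<le> r"
  shows "(\<forall>u. length u = r \<and> u ! (r - 1) \<noteq> 0 \<and> sum_list u \<noteq> 0 \<longrightarrow> senary_relation M u) \<longleftrightarrow>
    (\<forall>x. length x = Suc r \<and> distinct x \<longrightarrow> collision_relation M x)"
proof (intro iffI allI impI)
  fix x :: "rat list"
  assume senary: "\<forall>u. length u = r \<and> u ! (r - 1) \<noteq> 0 \<and> sum_list u \<noteq> 0 \<longrightarrow> senary_relation M u"
    and x: "length x = Suc r \<and> distinct x"
  then have len: "length x = Suc r" by simp
  have "x ! 1 \<noteq> x ! 2" "x ! 1 \<noteq> x ! 0" using x assms(2) by (simp_all add: nth_eq_iff_index_eq)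
  then have "senary_relation M (utrans_arg x)"
    using senary[rule_format, of "utrans_arg x"] last_utrans_arg[OF len assms(2)]
      sum_list_utrans_arg[OF len] len assms(2) by simp
  then show "collision_relation M x"
    using collision_relation_iff_senary_relation x assms(2) by blast
next
  fix u :: "rat list"
  assume collision: "\<forall>x. length x = Suc r \<and> distinct x \<longrightarrow> collision_relation M x"
    and u: "length u = r \<and> u ! (r - 1) \<noteq> 0 \<and> sum_list u \<noteq> 0"
  define x where "x = utrans_arg_inv u"
  have len: "length x = Suc r" and ux: "utrans_arg x = u"
    using u by (simp_all add: x_def utrans_arg_utrans_arg_inv)
  have "x ! 0 \<noteq> x ! 1" "x ! 1 \<noteq> x ! 2"
    using u ux sum_list_utrans_arg[OF len] last_utrans_arg[OF len assms(2)] assms(2) by auto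
  then have "collision_relation M x"
    using collision_relation_of_distinct[OF assms _ len] collision by blast
  then show "senary_relation M u"
    using collision_relation_iff_senary_relation[OF len assms(2)] ux by simp
qed

theorem lemma4p1:
  fixes M :: "rat list \<Rightarrow> rat" and r :: nat
  assumes "1 \<le> r" and "M \<in> ARI"
  shows "(\<forall>u. length u = r \<and> u ! (r - 1) \<noteq> 0 \<and> sum_list u \<noteq> 0 \<longrightarrow>
            teru M u = push (mantar (teru (mantar M))) u)
     \<longleftrightarrow>
         (\<forall>x. length x = r + 1 \<and> distinct x \<longrightarrow>
            utrans M x + coll (r + 1) 2 (utrans M) x
              = utrans M (tl x @ [hd x]) + coll (r + 1) 1 (utrans M) x)"
proof -
  have mould: "is_mould M" using assms(2) by (simp add: ARI_def)
  have collision: "(\<forall>x. length x = r + 1 \<and> distinct x \<longrightarrow>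
            utrans M x + coll (r + 1) 2 (utrans M) x
              = utrans M (tl x @ [hd x]) + coll (r + 1) 1 (utrans M) x) \<longleftrightarrow>
        (\<forall>x. length x = Suc r \<and> distinct x \<longrightarrow> collision_relation M x)"
    by (auto simp: collision_relation_def)
  show ?thesis
  proof (cases "r = 1")
    case True
    then show ?thesis
      using senary_iff_collision_depth_one[of M] collision unfolding senary_relation_def
      by (simp add: numeral_2_eq_2)
  next
    case False
    then show ?thesis
      using senary_iff_collision[OF mould, of r] collision assms(1) unfolding senary_relation_def
        by simp
  qed
qed

end
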